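(* Let $G=(V,E)$ be a directed graph, $s\neq t$ vertices, $u\in V$ and $l\ge 1$ an integer. Then there exists a (not necessarily simple) path from $s$ to $u$ of length at most $l$ not containing $t$ if and only if there exists a simple such path, and in that case $EV_l(s,u)=EV^*_l(s,u)$.
   Context: A path from $x$ to $y$ in $G$ is a vertex sequence $x=v_0,\dots,v_m=y$ with $(v_{i-1},v_i)\in E$ (vertices may repeat); its length is $m$ and $V(p)$ is its vertex set. A simple path has no repeated vertex. $EV_l(s,u)$ is the intersection of $V(p)$ over all paths $p$ (not necessarily simple) from $s$ to $u$ of length at most $l$ with $t\notin V(p)$, and it exists iff this family is nonempty. $EV^*_l(s,u)$ is the intersection of $V(p)$ over all simple paths $p$ from $s$ to $u$ of length at most $l$ with $t\notin V(p)$, and it exists iff this family is nonempty. *)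

theory Defs
  imports Main
begin

text \<open>A directed graph is a vertex set V and an edge set E \<subseteq> V \<times> V.
A path is a nonempty vertex list v0,...,vm with consecutive pairs in E;
its length is m = length p - 1 and V(p) = set p.\<close>

definition is_path :: "('a \<times> 'a) set \<Rightarrow> 'a \<Rightarrow> 'a \<Rightarrow> 'a list \<Rightarrow> bool" where
  "is_path E x y p \<longleftrightarrow> p \<noteq> [] \<and> hd p = x \<and> last p = y \<and>
     (\<forall>i. Suc i < length p \<longrightarrow> (p ! i, p ! Suc i) \<in> E)"

definition path_len :: "'a list \<Rightarrow> nat" where
  "path_len p = length p - 1"

definition bounded_paths :: "('a \<times> 'a) set \<Rightarrow> 'a \<Rightarrow> nat \<Rightarrow> 'a \<Rightarrow> 'a \<Rightarrow> 'a list set" where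
  "bounded_paths E t l s u = {p. is_path E s u p \<and> path_len p \<le> l \<and> t \<notin> set p}"

definition bounded_simple_paths :: "('a \<times> 'a) set \<Rightarrow> 'a \<Rightarrow> nat \<Rightarrow> 'a \<Rightarrow> 'a \<Rightarrow> 'a list set" where
  "bounded_simple_paths E t l s u = {p \<in> bounded_paths E t l s u. distinct p}"

definition EV :: "('a \<times> 'a) set \<Rightarrow> 'a \<Rightarrow> nat \<Rightarrow> 'a \<Rightarrow> 'a \<Rightarrow> 'a set" where
  "EV E t l s u = (\<Inter>p \<in> bounded_paths E t l s u. set p)"

definition EV_star :: "('a \<times> 'a) set \<Rightarrow> 'a \<Rightarrow> nat \<Rightarrow> 'a \<Rightarrow> 'a \<Rightarrow> 'a set" where
  "EV_star E t l s u = (\<Inter>p \<in> bounded_simple_paths E t l s u. set p)"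

end

theory Submission
  imports Defs
begin

text \<open>Cutting the cycles out of a path yields a simple path with the same endpoints, no longer
and using only vertices of the original one; in particular it still avoids \<open>t\<close>. Hence every
admissible path contains the vertex set of an admissible simple one, and intersecting over the
simple paths alone does not change \<open>EV\<close>.\<close>

lemma is_path_iff_successively:
  "is_path E x y p \<longleftrightarrow>
     p \<noteq> [] \<and> hd p = x \<and> last p = y \<and> successively (\<lambda>a b. (a, b) \<in> E) p"
  unfolding is_path_def successively_conv_nth by blast

lemma successively_distinct_shortening:
  assumes "successively P xs" and "xs \<noteq> []"
  shows "\<exists>ys. ys \<noteq> [] \<and> successively P ys \<and> distinct ys \<and> set ys \<subseteq> set xs \<and>
           length ys \<le> length xs \<and> hd ys = hd xs \<and> last ys = last xs"
  using assms
proof (induction xs)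
  case Nil
  then show ?case by simp
next
  case (Cons a xs)
  show ?case
  proof (cases "xs = []")
    case True
    then show ?thesis by (intro exI[of _ "[a]"]) simp
  next
    case False
    with Cons.prems have edge: "P a (hd xs)" and "successively P xs"
      by (simp_all add: successively_Cons)
    with \<open>xs \<noteq> []\<close> Cons.IH obtain ys where ys: "ys \<noteq> []" "successively P ys" "distinct ys"
      "set ys \<subseteq> set xs" "length ys \<le> length xs" "hd ys = hd xs" "last ys = last xs"
      by blast
    show ?thesis
    proof (cases "a \<in> set ys")
      case True
      then obtain zs ws where split: "ys = zs @ a # ws"
        by (meson split_list)
      \<comment> \<open>the loop from \<open>a\<close> back to \<open>a\<close> is cut off\<close>
      show ?thesis
        using ys split by (intro exI[of _ "a # ws"]) (auto simp: successively_append_iff)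
    next
      case False
      show ?thesis
        using ys edge \<open>a \<notin> set ys\<close> by (intro exI[of _ "a # ys"]) (auto simp: successively_Cons)
    qed
  qed
qed

lemma bounded_path_has_simple_subpath:
  assumes "p \<in> bounded_paths E t l s u"
  shows "\<exists>q \<in> bounded_simple_paths E t l s u. set q \<subseteq> set p"
proof -
  from assms have p: "p \<noteq> []" "hd p = s" "last p = u" "successively (\<lambda>a b. (a, b) \<in> E) p"
      "length p - 1 \<le> l" "t \<notin> set p"
    unfolding bounded_paths_def is_path_iff_successively path_len_def by auto
  then obtain q where q: "q \<noteq> []" "successively (\<lambda>a b. (a, b) \<in> E) q" "distinct q"
      "set q \<subseteq> set p" "length q \<le> length p" "hd q = s" "last q = u"
    using successively_distinct_shortening by metis
  with p have "q \<in> bounded_simple_paths E t l s u"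
    unfolding bounded_simple_paths_def bounded_paths_def is_path_iff_successively path_len_def
    by auto
  with q(4) show ?thesis by blast
qed

theorem theorem3p5:
  fixes V :: "'a set" and E :: "('a \<times> 'a) set" and s t u :: 'a and l :: nat
  assumes "E \<subseteq> V \<times> V"
    and "s \<in> V" and "t \<in> V" and "u \<in> V"
    and "s \<noteq> t"
    and "l \<ge> 1"
  shows "(bounded_paths E t l s u \<noteq> {} \<longleftrightarrow> bounded_simple_paths E t l s u \<noteq> {})
         \<and> (bounded_paths E t l s u \<noteq> {} \<longrightarrow> EV E t l s u = EV_star E t l s u)"
proof -
  have simple_subset: "bounded_simple_paths E t l s u \<subseteq> bounded_paths E t l s u"
    unfolding bounded_simple_paths_def by blast
  have "EV E t l s u = EV_star E t l s u"
    unfolding EV_def EV_star_def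
  proof (rule INF_eq)
    show "\<exists>q \<in> bounded_simple_paths E t l s u. set q \<subseteq> set p"
      if "p \<in> bounded_paths E t l s u" for p
      using that by (rule bounded_path_has_simple_subpath)
    show "\<exists>p \<in> bounded_paths E t l s u. set p \<subseteq> set q"
      if "q \<in> bounded_simple_paths E t l s u" for q
      using that simple_subset by blast
  qed
  moreover have "bounded_paths E t l s u \<noteq> {} \<longleftrightarrow> bounded_simple_paths E t l s u \<noteq> {}"
    using simple_subset bounded_path_has_simple_subpath[of _ E t l s u] by blast
  ultimately show ?thesis
    by blast
qed

end
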